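(* Let $N\in\mathbb{N}$, $m\in\mathrm{Ran}[m_N]\setminus\{-1,1\}$, $\mu\in\mathbb{R}$ and $\eta>0$. There is a cutoff $N(m,\eta)\in\mathbb{N}$ such that for $N\ge N(m,\eta)$, \[ \left(\tfrac12-\eta\right)\frac{\ln(N+1)}{N}\le\frac{\mathcal{H}(\mu_{\mathrm{MC}}^{m;N}\,\|\,\mu_{\mathrm{C}}^{\mu;N})}{N}-F(m,\mu)\le\frac{\ln(N+1)}{N}, \] where $F(m,\mu)=\ln2+\ln\cosh\mu+\mu m+\frac{1+m}2\ln\frac{1+m}2+\frac{1-m}2\ln\frac{1-m}2$. Moreover, every pair $(m,\mu)\in(\mathrm{Ran}[m_N]\setminus\{-1,1\})\times\mathbb{R}$ with $m=-\tanh\mu$ satisfies $F(m,\mu)=0$, and there are no other solutions of $F(m,\mu)=0$ among such pairs.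
   Context: $\Lambda$ is a finite lattice with $N=|\Lambda|$ sites, $\mathcal{S}=\{-1,1\}^\Lambda$, magnetization $M[\phi]=\sum_{x\in\Lambda}\phi(x)$, and $m_N[\phi]=M[\phi]/N$; $\mathrm{Ran}[m_N]$ is its range. For $m\in\mathrm{Ran}[m_N]$, $\mathcal{S}_m=\{\phi: m_N[\phi]=m\}$ and $\mu_{\mathrm{MC}}^{m;N}$ is the uniform probability measure on $\mathcal{S}_m$. For $\mu\in\mathbb{R}$, $\mu_{\mathrm{C}}^{\mu;N}$ is the probability measure on $\mathcal{S}$ with weights proportional to $e^{-\mu M[\phi]}$. The relative entropy is $\mathcal{H}(\lambda_1\|\lambda_2)=\int d\lambda_1\ln\frac{d\lambda_1}{d\lambda_2}$ if $\lambda_1\ll\lambda_2$ and $+\infty$ otherwise. *)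

theory Defs
  imports "HOL-Probability.Probability"
begin

text \<open>Spin configurations on a finite lattice (site set) \<Lambda>: functions \<Lambda> \<rightarrow> {-1,1},
  represented extensionally (value 0 outside \<Lambda>).\<close>
definition spins :: "'a set \<Rightarrow> ('a \<Rightarrow> int) set" where
  "spins \<Lambda> = {\<phi>. (\<forall>x\<in>\<Lambda>. \<phi> x \<in> {-1, 1}) \<and> (\<forall>x. x \<notin> \<Lambda> \<longrightarrow> \<phi> x = 0)}"

definition magn :: "'a set \<Rightarrow> ('a \<Rightarrow> int) \<Rightarrow> real" where
  "magn \<Lambda> \<phi> = (\<Sum>x\<in>\<Lambda>. real_of_int (\<phi> x))"

definition magn_density :: "'a set \<Rightarrow> ('a \<Rightarrow> int) \<Rightarrow> real" where
  "magn_density \<Lambda> \<phi> = magn \<Lambda> \<phi> / real (card \<Lambda>)"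

definition magn_range :: "'a set \<Rightarrow> real set" where
  "magn_range \<Lambda> = magn_density \<Lambda> ` spins \<Lambda>"

definition spins_m :: "'a set \<Rightarrow> real \<Rightarrow> ('a \<Rightarrow> int) set" where
  "spins_m \<Lambda> m = {\<phi> \<in> spins \<Lambda>. magn_density \<Lambda> \<phi> = m}"

definition mu_MC :: "'a set \<Rightarrow> real \<Rightarrow> ('a \<Rightarrow> int) pmf" where
  "mu_MC \<Lambda> m = pmf_of_set (spins_m \<Lambda> m)"

definition mu_C :: "'a set \<Rightarrow> real \<Rightarrow> ('a \<Rightarrow> int) pmf" where
  "mu_C \<Lambda> \<mu> = embed_pmf (\<lambda>\<phi>. if \<phi> \<in> spins \<Lambda>
      then exp (- \<mu> * magn \<Lambda> \<phi>) / (\<Sum>\<psi>\<in>spins \<Lambda>. exp (- \<mu> * magn \<Lambda> \<psi>)) else 0)"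

definition rel_entropy :: "'b pmf \<Rightarrow> 'b pmf \<Rightarrow> ereal" where
  "rel_entropy p q = (if set_pmf p \<subseteq> set_pmf q
     then ereal (measure_pmf.expectation p (\<lambda>x. ln (pmf p x / pmf q x))) else \<infinity>)"

definition F_fun :: "real \<Rightarrow> real \<Rightarrow> real" where
  "F_fun m \<mu> = ln 2 + ln (cosh \<mu>) + \<mu> * m + (1 + m) / 2 * ln ((1 + m) / 2)
              + (1 - m) / 2 * ln ((1 - m) / 2)"

end

(* Identifying a configuration with its set of up-spins, the
   canonical measure has partition function (2 cosh mu)^N, and the microcanonical measure is
   uniform on the (N choose k) configurations with k = N (1 + m) / 2 up-spins, so
     H(mu_MC | mu_C) = N ln (2 cosh mu) + mu N m - ln (N choose k),
   while N F(m, mu) is the same expression with ln (N choose k) replaced by N times the binary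
   entropy of k / N. Stirling's formula with remainder between 1/2 and 1 gives
     ln (N choose k) = N H(k / N) - ln (k (N - k) / N) / 2 + O(1),
   which yields both bounds once ln N dominates the constants. Finally, F(m, mu) is the relative
   entropy of Bernoulli((1 + m) / 2) with respect to Bernoulli((1 - tanh mu) / 2), so by Gibbs'
   inequality it vanishes exactly when m = - tanh mu. *)

theory Submission
  imports Defs
begin

lemma ln_one_plus_lower_bound:
  fixes x :: real assumes "0 \<le> x" shows "2 * x / (2 + x) \<le> ln (1 + x)"
proof -
  let ?f = "\<lambda>x::real. ln (1 + x) - 2 * x / (2 + x)"
  have "?f 0 \<le> ?f x"
  proof (rule DERIV_nonneg_imp_nondecreasing[OF assms])
    fix y :: real assume "0 \<le> y"
    then have "(?f has_real_derivative (1 / (1 + y) - 4 / (2 + y)\<^sup>2)) (at y)"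
      by (auto intro!: derivative_eq_intros simp: power2_eq_square)
    moreover have "1 / (1 + y) - 4 / (2 + y)\<^sup>2 = y\<^sup>2 / ((1 + y) * (2 + y)\<^sup>2)"
      using \<open>0 \<le> y\<close> by (simp add: diff_frac_eq) (simp add: power2_eq_square algebra_simps)
    ultimately show "\<exists>d. (?f has_real_derivative d) (at y) \<and> 0 \<le> d"
      using \<open>0 \<le> y\<close> by fastforce
  qed
  then show ?thesis by simp
qed

lemma ln_one_plus_upper_bound:
  fixes x :: real assumes "0 \<le> x" shows "ln (1 + x) \<le> x - x\<^sup>2 / 2 + x ^ 3 / 3"
proof -
  let ?f = "\<lambda>x::real. x - x\<^sup>2 / 2 + x ^ 3 / 3 - ln (1 + x)"
  have "?f 0 \<le> ?f x"
  proof (rule DERIV_nonneg_imp_nondecreasing[OF assms])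
    fix y :: real assume "0 \<le> y"
    then have "(?f has_real_derivative (1 - y + y\<^sup>2 - 1 / (1 + y))) (at y)"
      by (auto intro!: derivative_eq_intros simp: field_simps power2_eq_square)
    moreover have "1 - y + y\<^sup>2 - 1 / (1 + y) = y ^ 3 / (1 + y)"
      using \<open>0 \<le> y\<close> by (simp add: field_simps power2_eq_square power3_eq_cube)
    ultimately show "\<exists>d. (?f has_real_derivative d) (at y) \<and> 0 \<le> d"
      using \<open>0 \<le> y\<close> by fastforce
  qed
  then show ?thesis by simp
qed

definition stirling_remainder :: "nat \<Rightarrow> real" where
  "stirling_remainder n = ln (fact n) - (real n + 1/2) * ln (real n) + real n"

lemma stirling_remainder_diff:
  assumes "n \<ge> 1"
  shows "stirling_remainder n - stirling_remainder (Suc n) = (real n + 1/2) * ln (1 + 1 / real n) - 1"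
proof -
  have "1 + 1 / real n = (real n + 1) / real n"
    using assms by (simp add: field_simps)
  then have ln_ratio: "ln (1 + 1 / real n) = ln (real n + 1) - ln (real n)"
    using assms by (simp add: ln_div)
  have ln_fact_Suc: "ln (fact (Suc n) :: real) = ln (real n + 1) + ln (fact n)"
    by (simp add: ln_mult del: of_nat_Suc)
  show ?thesis
    unfolding stirling_remainder_def ln_fact_Suc ln_ratio of_nat_Suc by (simp add: algebra_simps)
qed

lemma stirling_remainder_diff_bounds:
  assumes "n \<ge> 1"
  shows "0 \<le> stirling_remainder n - stirling_remainder (Suc n)"
    and "stirling_remainder n - stirling_remainder (Suc n) \<le> 1 / (2 * real n * (real n + 1))"
proof -
  have n: "real n \<ge> 1" using assms by simp
  have "1 = (real n + 1/2) * (2 * (1 / real n) / (2 + 1 / real n))"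
    using n by (simp add: field_simps)
  also have "\<dots> \<le> (real n + 1/2) * ln (1 + 1 / real n)"
    by (intro mult_left_mono ln_one_plus_lower_bound) auto
  finally show "0 \<le> stirling_remainder n - stirling_remainder (Suc n)"
    using stirling_remainder_diff[OF assms] by simp
  have "(real n + 1/2) * ln (1 + 1 / real n)
      \<le> (real n + 1/2) * (1 / real n - (1 / real n)\<^sup>2 / 2 + (1 / real n) ^ 3 / 3)"
    by (intro mult_left_mono ln_one_plus_upper_bound) auto
  also have "\<dots> = 1 + 1 / (12 * real n ^ 2) + 1 / (6 * real n ^ 3)"
    using n by (simp add: field_simps power2_eq_square power3_eq_cube)
  also have "\<dots> \<le> 1 + 1 / (12 * real n ^ 2) + 1 / (6 * real n ^ 2)"
    using n by (intro add_left_mono divide_left_mono mult_left_mono power_increasing) auto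
  also have "\<dots> = 1 + 1 / (4 * real n ^ 2)"
    using n by (simp add: field_simps)
  also have "\<dots> \<le> 1 + 1 / (2 * real n * (real n + 1))"
    using n by (simp add: frac_le power2_eq_square)
  finally show "stirling_remainder n - stirling_remainder (Suc n) \<le> 1 / (2 * real n * (real n + 1))"
    using stirling_remainder_diff[OF assms] by simp
qed

lemma stirling_remainder_bounds:
  assumes "n \<ge> 1"
  shows "1/2 \<le> stirling_remainder n \<and> stirling_remainder n \<le> 1"
proof -
  have "1/2 + 1 / (2 * real n) \<le> stirling_remainder n \<and> stirling_remainder n \<le> 1"
    using assms
  proof (induction n rule: dec_induct)
    case base
    show ?case by (simp add: stirling_remainder_def)
  next
    case (step n)
    have "1 / (2 * real n) - 1 / (2 * real n * (real n + 1)) = 1 / (2 * real (Suc n))"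
      using step(1) by (simp add: divide_simps)
    then show ?case using stirling_remainder_diff_bounds[OF step(1)] step(3) by linarith
  qed
  moreover have "0 \<le> 1 / (2 * real n)" by simp
  ultimately show ?thesis by linarith
qed

definition binary_entropy :: "real \<Rightarrow> real" where
  "binary_entropy p = - p * ln p - (1 - p) * ln (1 - p)"

lemma ln_binomial_bounds:
  fixes k N :: nat
  assumes "0 < k" "k < N"
  shows "real N * binary_entropy (real k / real N) - ln (real k * real (N - k) / real N) / 2 - 3/2
           \<le> ln (real (N choose k))"
    and "ln (real (N choose k))
           \<le> real N * binary_entropy (real k / real N) - ln (real k * real (N - k) / real N) / 2"
proof -
  let ?r = stirling_remainder
  let ?NH = "real N * binary_entropy (real k / real N)"
  let ?L = "ln (real k * real (N - k) / real N)"
  have pos: "real k > 0" "real (N - k) > 0" "real N > 0" using assms by auto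
  have "real (N choose k) = fact N / (fact k * fact (N - k))"
    using assms by (simp add: binomial_fact)
  then have "ln (real (N choose k)) = ln (fact N) - ln (fact k) - ln (fact (N - k))"
    by (simp add: ln_div ln_mult)
  moreover have "?L = ln (real k) + ln (real (N - k)) - ln (real N)"
    using pos by (simp add: ln_div ln_mult)
  moreover have "?NH = real N * ln (real N) - real k * ln (real k) - real (N - k) * ln (real (N - k))"
  proof -
    have "1 - real k / real N = real (N - k) / real N"
      using assms pos by (simp add: field_simps of_nat_diff)
    then show ?thesis
      using pos assms by (simp add: binary_entropy_def ln_div field_simps of_nat_diff)
  qed
  ultimately have "ln (real (N choose k)) = ?NH - ?L / 2 + ?r N - ?r k - ?r (N - k)"
    using assms by (simp add: stirling_remainder_def algebra_simps of_nat_diff)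
  moreover have "1/2 \<le> ?r k \<and> ?r k \<le> 1" "1/2 \<le> ?r (N - k) \<and> ?r (N - k) \<le> 1"
    "1/2 \<le> ?r N \<and> ?r N \<le> 1"
    by (rule stirling_remainder_bounds; use assms in simp)+
  ultimately show "?NH - ?L / 2 - 3/2 \<le> ln (real (N choose k))" "ln (real (N choose k)) \<le> ?NH - ?L / 2"
    by linarith+
qed

lemma binomial_entropy_gap_bounds:
  fixes k N :: nat and \<eta> :: real
  assumes "0 < k" "k < N" "3 \<le> ln (real N + 1)"
    and "ln 2 - ln (real k / real N * (1 - real k / real N)) \<le> 2 * \<eta> * ln (real N + 1)"
  shows "(1/2 - \<eta>) * ln (real N + 1) \<le> real N * binary_entropy (real k / real N) - ln (real (N choose k))"
    and "real N * binary_entropy (real k / real N) - ln (real (N choose k)) \<le> ln (real N + 1)"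
proof -
  define p where "p = real k / real N"
  have N: "real N > 0" "real N \<ge> 1" using assms by auto
  have "0 < p" "p < 1"
    using assms by (auto simp: p_def)
  then have "0 < p * (1 - p)" "p * (1 - p) \<le> 1"
    by (auto intro: mult_le_one)
  moreover have "real k * real (N - k) / real N = real N * (p * (1 - p))"
    using assms by (simp add: p_def field_simps of_nat_diff)
  ultimately have "ln (real k * real (N - k) / real N) = ln (real N) + ln (p * (1 - p))"
    "ln (p * (1 - p)) \<le> 0"
    using N by (simp_all only: ln_mult_pos ln_le_zero_iff)
  moreover have "ln (real N + 1) \<le> ln 2 + ln (real N)"
  proof -
    have "ln (real N + 1) \<le> ln (2 * real N)"
      using N by simp
    then show ?thesis
      using N by (simp add: ln_mult_pos)
  qed
  moreover have "ln (real N) \<le> ln (real N + 1)"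
    using N by simp
  ultimately show "(1/2 - \<eta>) * ln (real N + 1) \<le> real N * binary_entropy p - ln (real (N choose k))"
    and "real N * binary_entropy p - ln (real (N choose k)) \<le> ln (real N + 1)"
    using ln_binomial_bounds[OF assms(1,2), folded p_def] assms(3,4)[folded p_def]
    unfolding left_diff_distrib by linarith+
qed

definition spin_of_set :: "'a set \<Rightarrow> 'a set \<Rightarrow> 'a \<Rightarrow> int" where
  "spin_of_set \<Lambda> A x = (if x \<in> A then 1 else if x \<in> \<Lambda> then -1 else 0)"

lemma bij_betw_spin_of_set: "bij_betw (spin_of_set \<Lambda>) (Pow \<Lambda>) (spins \<Lambda>)"
proof (rule bij_betw_byWitness[where f' = "\<lambda>\<phi>. {x\<in>\<Lambda>. \<phi> x = 1}"])
  show "\<forall>A\<in>Pow \<Lambda>. {x \<in> \<Lambda>. spin_of_set \<Lambda> A x = 1} = A"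
    by (auto simp: spin_of_set_def)
  show "\<forall>\<phi>\<in>spins \<Lambda>. spin_of_set \<Lambda> {x \<in> \<Lambda>. \<phi> x = 1} = \<phi>"
    by (auto simp: spin_of_set_def spins_def fun_eq_iff)
  show "spin_of_set \<Lambda> ` Pow \<Lambda> \<subseteq> spins \<Lambda>"
    by (auto simp: spin_of_set_def spins_def)
qed auto

lemma magn_spin_of_set:
  assumes "finite \<Lambda>" "A \<subseteq> \<Lambda>"
  shows "magn \<Lambda> (spin_of_set \<Lambda> A) = 2 * real (card A) - real (card \<Lambda>)"
proof -
  have "magn \<Lambda> (spin_of_set \<Lambda> A) = (\<Sum>x\<in>\<Lambda>. if x \<in> A then 1 else -1)"
    unfolding magn_def by (intro sum.cong) (auto simp: spin_of_set_def)
  also have "\<dots> = real (card A) - real (card (\<Lambda> - A))"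
    using assms by (simp add: sum.If_cases Int_absorb1 Diff_eq)
  also have "real (card (\<Lambda> - A)) = real (card \<Lambda>) - real (card A)"
    using assms by (simp add: card_Diff_subset finite_subset of_nat_diff card_mono)
  finally show ?thesis by simp
qed

lemma card_image_Pow: "finite A \<Longrightarrow> card ` Pow A = {..card A}"
  by (auto simp: card_mono elim!: obtain_subset_with_card_n)

lemma magn_range_eq:
  assumes "finite \<Lambda>"
  shows "magn_range \<Lambda> = (\<lambda>k. (2 * real k - real (card \<Lambda>)) / real (card \<Lambda>)) ` {..card \<Lambda>}"
proof -
  have "magn_range \<Lambda> = magn_density \<Lambda> ` spin_of_set \<Lambda> ` Pow \<Lambda>"
    unfolding magn_range_def bij_betw_imp_surj_on[OF bij_betw_spin_of_set] ..
  also have "\<dots> = (\<lambda>k. (2 * real k - real (card \<Lambda>)) / real (card \<Lambda>)) ` card ` Pow \<Lambda>"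
    unfolding image_image using assms by (intro image_cong refl) (simp add: magn_density_def magn_spin_of_set)
  finally show ?thesis
    using card_image_Pow[OF assms] by simp
qed

lemma magn_range_subset:
  assumes "finite \<Lambda>"
  shows "magn_range \<Lambda> \<subseteq> {-1..1}"
proof -
  have "-1 \<le> (2 * real k - real N) / real N \<and> (2 * real k - real N) / real N \<le> 1"
    if "k \<le> N" for k N :: nat
    using that by (cases "N = 0") (auto simp: divide_simps)
  then show ?thesis
    unfolding magn_range_eq[OF assms] by auto
qed

lemma magn_range_interiorE:
  assumes "finite \<Lambda>" "card \<Lambda> > 0" "m \<in> magn_range \<Lambda> - {-1, 1}"
  obtains k where "0 < k" "k < card \<Lambda>" "m = (2 * real k - real (card \<Lambda>)) / real (card \<Lambda>)"
proof -
  obtain k where "k \<le> card \<Lambda>" and m: "m = (2 * real k - real (card \<Lambda>)) / real (card \<Lambda>)"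
    using assms(3) unfolding magn_range_eq[OF assms(1)] by auto
  have "k = 0 \<Longrightarrow> m = -1" "k = card \<Lambda> \<Longrightarrow> m = 1"
    using assms(2) by (simp_all add: m)
  then have "0 < k" "k < card \<Lambda>"
    using assms(3) \<open>k \<le> card \<Lambda>\<close> by (auto simp: le_less)
  then show thesis
    using that m by blast
qed

lemma spins_m_eq:
  assumes "finite \<Lambda>" "card \<Lambda> > 0" "m = (2 * real k - real (card \<Lambda>)) / real (card \<Lambda>)"
  shows "spins_m \<Lambda> m = spin_of_set \<Lambda> ` {A. A \<subseteq> \<Lambda> \<and> card A = k}"
proof -
  have density_eq_iff: "magn_density \<Lambda> (spin_of_set \<Lambda> A) = m \<longleftrightarrow> card A = k" if "A \<subseteq> \<Lambda>" for A
    using assms that by (simp add: magn_density_def magn_spin_of_set divide_cancel_right card_gt_0_iff)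
  have "spins_m \<Lambda> m = {\<phi> \<in> spin_of_set \<Lambda> ` Pow \<Lambda>. magn_density \<Lambda> \<phi> = m}"
    unfolding spins_m_def bij_betw_imp_surj_on[OF bij_betw_spin_of_set] ..
  also have "\<dots> = spin_of_set \<Lambda> ` {A \<in> Pow \<Lambda>. magn_density \<Lambda> (spin_of_set \<Lambda> A) = m}"
    by blast
  also have "{A \<in> Pow \<Lambda>. magn_density \<Lambda> (spin_of_set \<Lambda> A) = m} = {A. A \<subseteq> \<Lambda> \<and> card A = k}"
    using density_eq_iff by auto
  finally show ?thesis .
qed

lemma card_spins_m:
  assumes "finite \<Lambda>" "card \<Lambda> > 0" "m = (2 * real k - real (card \<Lambda>)) / real (card \<Lambda>)"
  shows "card (spins_m \<Lambda> m) = card \<Lambda> choose k"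
proof -
  have "inj_on (spin_of_set \<Lambda>) {A. A \<subseteq> \<Lambda> \<and> card A = k}"
    using bij_betw_imp_inj_on[OF bij_betw_spin_of_set] by (rule inj_on_subset) auto
  then show ?thesis
    unfolding spins_m_eq[OF assms] by (simp add: card_image n_subsets assms(1))
qed

lemma sum_spins_exp_magn:
  assumes "finite \<Lambda>"
  shows "(\<Sum>\<phi>\<in>spins \<Lambda>. exp (- \<mu> * magn \<Lambda> \<phi>)) = (2 * cosh \<mu>) ^ card \<Lambda>"
proof -
  have "(\<Sum>\<phi>\<in>spins \<Lambda>. exp (- \<mu> * magn \<Lambda> \<phi>))
      = (\<Sum>A\<in>Pow \<Lambda>. exp (- \<mu> * magn \<Lambda> (spin_of_set \<Lambda> A)))"
    by (rule sum.reindex_bij_betw[OF bij_betw_spin_of_set, symmetric])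
  also have "\<dots> = (\<Sum>A\<in>Pow \<Lambda>. (\<Prod>x\<in>A. exp (- \<mu>)) * (\<Prod>x\<in>\<Lambda> - A. exp \<mu>))"
  proof (intro sum.cong refl)
    fix A assume "A \<in> Pow \<Lambda>"
    then have "A \<subseteq> \<Lambda>" "card (\<Lambda> - A) = card \<Lambda> - card A" "card A \<le> card \<Lambda>"
      using assms by (auto simp: card_Diff_subset finite_subset card_mono)
    have "(\<Prod>x\<in>A. exp (- \<mu>)) * (\<Prod>x\<in>\<Lambda> - A. exp \<mu>)
        = exp (- \<mu>) ^ card A * exp \<mu> ^ card (\<Lambda> - A)"
      by simp
    also have "\<dots> = exp (- \<mu> * magn \<Lambda> (spin_of_set \<Lambda> A))"
      using assms \<open>A \<subseteq> \<Lambda>\<close> \<open>card (\<Lambda> - A) = card \<Lambda> - card A\<close> \<open>card A \<le> card \<Lambda>\<close>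
      by (simp add: magn_spin_of_set exp_of_nat_mult[symmetric] exp_add[symmetric] of_nat_diff
          algebra_simps)
    finally show "exp (- \<mu> * magn \<Lambda> (spin_of_set \<Lambda> A)) = (\<Prod>x\<in>A. exp (- \<mu>)) * (\<Prod>x\<in>\<Lambda> - A. exp \<mu>)"
      by simp
  qed
  also have "\<dots> = (\<Prod>x\<in>\<Lambda>. exp (- \<mu>) + exp \<mu>)"
    by (rule prod_add[OF assms, symmetric])
  also have "exp (- \<mu>) + exp \<mu> = 2 * cosh \<mu>"
    by (simp add: cosh_def)
  finally show ?thesis by simp
qed

lemma pmf_mu_C:
  assumes "finite \<Lambda>"
  shows "pmf (mu_C \<Lambda> \<mu>) \<phi> =
    (if \<phi> \<in> spins \<Lambda> then exp (- \<mu> * magn \<Lambda> \<phi>) / (2 * cosh \<mu>) ^ card \<Lambda> else 0)"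
proof -
  have fin: "finite (spins \<Lambda>)"
    using bij_betw_finite[OF bij_betw_spin_of_set[of \<Lambda>]] assms by simp
  let ?Z = "\<Sum>\<psi>\<in>spins \<Lambda>. exp (- \<mu> * magn \<Lambda> \<psi>)"
  have Z: "?Z = (2 * cosh \<mu>) ^ card \<Lambda>"
    by (rule sum_spins_exp_magn[OF assms])
  then have Z_pos: "?Z > 0" by simp
  let ?f = "\<lambda>\<phi>. if \<phi> \<in> spins \<Lambda> then exp (- \<mu> * magn \<Lambda> \<phi>) / ?Z else 0"
  have "pmf (embed_pmf ?f) \<phi> = ?f \<phi>"
  proof (rule pmf_embed_pmf)
    show "\<And>\<phi>. 0 \<le> ?f \<phi>" using Z_pos by simp
    have "(\<integral>\<^sup>+\<phi>. ennreal (?f \<phi>) \<partial>count_space UNIV) = (\<Sum>\<phi>\<in>spins \<Lambda>. ennreal (?f \<phi>))"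
      using fin by (intro nn_integral_count_space') auto
    also have "\<dots> = ennreal (\<Sum>\<phi>\<in>spins \<Lambda>. ?f \<phi>)"
      using Z_pos by (intro sum_ennreal) auto
    also have "(\<Sum>\<phi>\<in>spins \<Lambda>. ?f \<phi>) = ?Z / ?Z"
      unfolding sum_divide_distrib by (rule sum.cong) auto
    also have "\<dots> = 1"
      using Z_pos by simp
    finally show "(\<integral>\<^sup>+\<phi>. ennreal (?f \<phi>) \<partial>count_space UNIV) = 1" by simp
  qed
  then show ?thesis unfolding mu_C_def Z by simp
qed

lemma rel_entropy_mu_MC_mu_C:
  assumes "finite \<Lambda>" "card \<Lambda> = N" "N > 0" "k \<le> N" "m = (2 * real k - real N) / real N"
  shows "rel_entropy (mu_MC \<Lambda> m) (mu_C \<Lambda> \<mu>) =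
     ereal (real N * ln (2 * cosh \<mu>) + \<mu> * real N * m - ln (real (N choose k)))"
proof -
  let ?S = "spins_m \<Lambda> m"
  let ?h = "real N * ln (2 * cosh \<mu>) + \<mu> * real N * m - ln (real (N choose k))"
  have card_S: "card ?S = N choose k"
    using card_spins_m[of \<Lambda> m k] assms by simp
  then have "card ?S > 0" using assms by simp
  then have fin: "finite ?S" and ne: "?S \<noteq> {}" using card_gt_0_iff by blast+
  have S: "\<phi> \<in> spins \<Lambda>" "magn \<Lambda> \<phi> = real N * m" if "\<phi> \<in> ?S" for \<phi>
    using that assms(2,3) by (auto simp: spins_m_def magn_density_def)
  have "set_pmf (mu_MC \<Lambda> m) \<subseteq> set_pmf (mu_C \<Lambda> \<mu>)"
    using S by (auto simp: mu_MC_def fin ne set_pmf_iff pmf_mu_C[OF assms(1)])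
  moreover have "ln (pmf (mu_MC \<Lambda> m) \<phi> / pmf (mu_C \<Lambda> \<mu>) \<phi>) = ?h" if "\<phi> \<in> ?S" for \<phi>
  proof -
    let ?C = "real (N choose k)" and ?E = "exp (- \<mu> * (real N * m))" and ?P = "(2 * cosh \<mu>) ^ N"
    have "?C > 0" using assms(4) by simp
    have "pmf (mu_MC \<Lambda> m) \<phi> = 1 / ?C"
      using that fin ne card_S by (simp add: mu_MC_def)
    moreover have "pmf (mu_C \<Lambda> \<mu>) \<phi> = ?E / ?P"
      using S[OF that] assms(2) by (simp add: pmf_mu_C[OF assms(1)])
    moreover have "ln ((1 / ?C) / (?E / ?P)) = ?h"
      using \<open>?C > 0\<close> by (simp add: ln_div ln_mult ln_realpow distrib_left)
    ultimately show ?thesis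
      by simp
  qed
  then have "measure_pmf.expectation (mu_MC \<Lambda> m) (\<lambda>\<phi>. ln (pmf (mu_MC \<Lambda> m) \<phi> / pmf (mu_C \<Lambda> \<mu>) \<phi>))
      = ?h"
    using \<open>card ?S > 0\<close> by (simp add: mu_MC_def[of \<Lambda> m] integral_pmf_of_set[OF ne fin])
  ultimately show ?thesis
    unfolding rel_entropy_def by simp
qed

lemma F_fun_eq_binary_entropy:
  "F_fun m \<mu> = ln (2 * cosh \<mu>) + \<mu> * m - binary_entropy ((1 + m) / 2)"
proof -
  have one_minus: "1 - (1 + m) / 2 = (1 - m) / 2" by (simp add: field_simps)
  have ln_cosh: "ln (2 * cosh \<mu>) = ln 2 + ln (cosh \<mu>)" by (simp add: ln_mult)
  show ?thesis
    unfolding F_fun_def binary_entropy_def one_minus ln_cosh by (simp add: algebra_simps)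
qed

definition binary_relative_entropy :: "real \<Rightarrow> real \<Rightarrow> real" where
  "binary_relative_entropy p q = p * ln (p / q) + (1 - p) * ln ((1 - p) / (1 - q))"

lemma binary_relative_entropy_eq_0_iff:
  assumes "0 < p" "p < 1" "0 < q" "q < 1"
  shows "binary_relative_entropy p q = 0 \<longleftrightarrow> p = q"
proof
  assume "binary_relative_entropy p q = 0"
  then have "p * ln (q / p) + (1 - p) * ln ((1 - q) / (1 - p)) = 0"
    using assms by (simp add: binary_relative_entropy_def ln_div algebra_simps)
  moreover have "p * ln (q / p) \<le> p * (q / p - 1)" "(1 - p) * ln ((1 - q) / (1 - p)) \<le> (1 - p) * ((1 - q) / (1 - p) - 1)"
    using assms by (intro mult_left_mono ln_le_minus_one; simp)+
  moreover have "p * (q / p - 1) + (1 - p) * ((1 - q) / (1 - p) - 1) = 0"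
    using assms by (simp add: field_simps)
  ultimately have "p * ln (q / p) = p * (q / p - 1)" by linarith
  then have "ln (q / p) = q / p - 1" using assms by simp
  then have "q / p = 1" using assms by (intro ln_eq_minus_one) auto
  then show "p = q" using assms by simp
qed (simp add: binary_relative_entropy_def)

text \<open>\<open>(1 - tanh \<mu>) / 2 = exp (- \<mu>) / (2 * cosh \<mu>)\<close> is the canonical probability of an
  up-spin, and \<open>(1 + m) / 2\<close> the microcanonical one.\<close>
lemma F_fun_eq_binary_relative_entropy:
  assumes "\<bar>m\<bar> < 1"
  shows "F_fun m \<mu> = binary_relative_entropy ((1 + m) / 2) ((1 - tanh \<mu>) / 2)"
proof -
  define p where "p = (1 + m) / 2"
  define q where "q = (1 - tanh \<mu>) / 2"
  have "cosh \<mu> > 0" by simp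
  then have "q = (cosh \<mu> - sinh \<mu>) / (2 * cosh \<mu>)" "1 - q = (sinh \<mu> + cosh \<mu>) / (2 * cosh \<mu>)"
    by (simp_all add: q_def tanh_def field_simps)
  then have "q = exp (- \<mu>) / (2 * cosh \<mu>)" "1 - q = exp \<mu> / (2 * cosh \<mu>)"
    by (simp_all only: cosh_minus_sinh sinh_plus_cosh)
  then have ln_q: "ln q = - \<mu> - ln (2 * cosh \<mu>)" "ln (1 - q) = \<mu> - ln (2 * cosh \<mu>)"
    by (simp_all add: ln_div)
  have "0 < p" "p < 1" "0 < q" "q < 1"
    using assms tanh_real_lt_1[of \<mu>] tanh_real_gt_neg1[of \<mu>] by (auto simp: p_def q_def)
  then have ln_ratios: "ln (p / q) = ln p - ln q" "ln ((1 - p) / (1 - q)) = ln (1 - p) - ln (1 - q)"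
    by (simp_all add: ln_div)
  have \<mu>_m: "\<mu> * m = \<mu> * (2 * p - 1)" by (simp add: p_def field_simps)
  show ?thesis
    unfolding F_fun_eq_binary_entropy \<mu>_m binary_entropy_def binary_relative_entropy_def
      p_def[symmetric] q_def[symmetric] ln_ratios ln_q
    by (simp add: algebra_simps)
qed

lemma F_fun_eq_0_iff:
  assumes "\<bar>m\<bar> < 1"
  shows "F_fun m \<mu> = 0 \<longleftrightarrow> m = - tanh \<mu>"
proof -
  have "0 < (1 + m) / 2" "(1 + m) / 2 < 1" using assms by auto
  moreover have "0 < (1 - tanh \<mu>) / 2" "(1 - tanh \<mu>) / 2 < 1"
    using tanh_real_lt_1[of \<mu>] tanh_real_gt_neg1[of \<mu>] by simp_all
  ultimately have "F_fun m \<mu> = 0 \<longleftrightarrow> (1 + m) / 2 = (1 - tanh \<mu>) / 2"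
    unfolding F_fun_eq_binary_relative_entropy[OF assms] by (rule binary_relative_entropy_eq_0_iff)
  then show ?thesis
    by auto
qed

text \<open>The exponent 3 lets \<open>ln (N + 1)\<close> absorb the constant of the Stirling error; the other
  term lets \<open>\<eta> ln (N + 1)\<close> absorb the \<open>m\<close>-dependent constant \<open>ln (k (N - k) / N\<^sup>2)\<close>.\<close>
definition entropy_cutoff :: "real \<Rightarrow> real \<Rightarrow> nat" where
  "entropy_cutoff m \<eta> = nat \<lceil>exp (max 3 ((ln 2 - ln ((1 - m\<^sup>2) / 4)) / (2 * \<eta>)))\<rceil>"

lemma ln_ge_of_entropy_cutoff_le:
  assumes "entropy_cutoff m \<eta> \<le> N"
  shows "3 \<le> ln (real N + 1)" "(ln 2 - ln ((1 - m\<^sup>2) / 4)) / (2 * \<eta>) \<le> ln (real N + 1)"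
proof -
  let ?M = "max 3 ((ln 2 - ln ((1 - m\<^sup>2) / 4)) / (2 * \<eta>))"
  have "exp ?M \<le> real (entropy_cutoff m \<eta>)"
    unfolding entropy_cutoff_def by linarith
  also have "\<dots> \<le> real N + 1"
    using assms by simp
  finally have "?M \<le> ln (real N + 1)"
    by (subst ln_ge_iff) auto
  then show "3 \<le> ln (real N + 1)" "(ln 2 - ln ((1 - m\<^sup>2) / 4)) / (2 * \<eta>) \<le> ln (real N + 1)"
    by simp_all
qed

lemma rel_entropy_mu_MC_mu_C_bounds:
  assumes "\<eta> > 0" "entropy_cutoff m \<eta> \<le> N" "finite \<Lambda>" "card \<Lambda> = N"
    and "m \<in> magn_range \<Lambda> - {-1, 1}"
  shows "\<exists>h. rel_entropy (mu_MC \<Lambda> m) (mu_C \<Lambda> \<mu>) = ereal h \<and>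
           (1/2 - \<eta>) * ln (real N + 1) / real N \<le> h / real N - F_fun m \<mu> \<and>
           h / real N - F_fun m \<mu> \<le> ln (real N + 1) / real N"
proof -
  note cutoff = ln_ge_of_entropy_cutoff_le[OF assms(2)]
  then have "N > 0" by (intro Nat.gr0I) simp
  obtain k where "0 < k" "k < N" and m: "m = (2 * real k - real N) / real N"
    using magn_range_interiorE[OF assms(3) _ assms(5)] assms(4) \<open>N > 0\<close> by blast
  define p where "p = real k / real N"
  have "(1 + m) / 2 = p" "(1 - m\<^sup>2) / 4 = p * (1 - p)"
    using \<open>N > 0\<close> by (simp_all add: m p_def field_simps power2_eq_square)
  moreover have "ln 2 - ln ((1 - m\<^sup>2) / 4) \<le> 2 * \<eta> * ln (real N + 1)"
    using cutoff(2) assms(1) by (simp add: pos_divide_le_eq mult.commute)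
  ultimately have gap: "(1/2 - \<eta>) * ln (real N + 1) \<le> real N * binary_entropy p - ln (real (N choose k))"
    "real N * binary_entropy p - ln (real (N choose k)) \<le> ln (real N + 1)"
    using binomial_entropy_gap_bounds[OF \<open>0 < k\<close> \<open>k < N\<close> cutoff(1), of \<eta>] by (simp_all add: p_def)
  define h where "h = real N * ln (2 * cosh \<mu>) + \<mu> * real N * m - ln (real (N choose k))"
  have "h / real N - F_fun m \<mu> = (real N * binary_entropy p - ln (real (N choose k))) / real N"
    unfolding h_def F_fun_eq_binary_entropy \<open>(1 + m) / 2 = p\<close>
    using \<open>N > 0\<close> by (simp add: field_simps)
  moreover have "rel_entropy (mu_MC \<Lambda> m) (mu_C \<Lambda> \<mu>) = ereal h"
    unfolding h_def using assms(3,4) \<open>N > 0\<close> less_imp_le[OF \<open>k < N\<close>] m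
    by (rule rel_entropy_mu_MC_mu_C)
  moreover have "(1/2 - \<eta>) * ln (real N + 1) / real N
      \<le> (real N * binary_entropy p - ln (real (N choose k))) / real N"
    "(real N * binary_entropy p - ln (real (N choose k))) / real N \<le> ln (real N + 1) / real N"
    using gap \<open>N > 0\<close> by (simp_all add: divide_right_mono)
  ultimately show ?thesis
    by auto
qed

theorem proposition3p6:
  fixes m \<eta> :: real
  shows "(\<eta> > 0 \<longrightarrow> (\<exists>N0::nat. \<forall>N\<ge>N0. \<forall>(\<Lambda>::'a set) \<mu>::real.
            finite \<Lambda> \<and> card \<Lambda> = N \<and> m \<in> magn_range \<Lambda> - {-1, 1} \<longrightarrow>
            (\<exists>h. rel_entropy (mu_MC \<Lambda> m) (mu_C \<Lambda> \<mu>) = ereal h \<and>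
               (1/2 - \<eta>) * ln (real N + 1) / real N \<le> h / real N - F_fun m \<mu> \<and>
               h / real N - F_fun m \<mu> \<le> ln (real N + 1) / real N))) \<and>
         (\<forall>(\<Lambda>::'a set) (m'::real) (\<mu>::real). finite \<Lambda> \<and> m' \<in> magn_range \<Lambda> - {-1, 1} \<longrightarrow>
            (F_fun m' \<mu> = 0 \<longleftrightarrow> m' = - tanh \<mu>))"
proof -
  have "F_fun m' \<mu> = 0 \<longleftrightarrow> m' = - tanh \<mu>"
    if "finite \<Lambda>" "m' \<in> magn_range \<Lambda> - {-1, 1}" for \<Lambda> :: "'a set" and m' \<mu> :: real
  proof (rule F_fun_eq_0_iff)
    show "\<bar>m'\<bar> < 1"
      using magn_range_subset[OF that(1)] that(2) by fastforce
  qed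
  then show ?thesis
    using rel_entropy_mu_MC_mu_C_bounds[where 'a = 'a] by blast
qed

end
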